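(* Fix integers $D\ge1$, $\bar L\ge1$, a probability law $P_L$ on $\{1,\dots,\bar L\}$, and measurable weight functions $g_\nu:\{1,\dots,L\}\times\mathbb R^L\to[0,\infty)$ (for each $L$) such that for every $k^*\in\mathbb R^D$, every $L$ and every $\epsilon$, $x\mapsto g_\nu(\epsilon,\frac1{\sqrt D}xk^* )\prod_{\ell=1}^L\mathcal N(x_\ell;0,I_D)$ is a probability density on $\mathbb R^{L\times D}$. Assume there is a constant $c_\nu\ge 0$ such that for all $L$, all $\epsilon,\epsilon'\in\{1,\dots,L\}$ and all $\chi\in\mathbb R^L$, $$\frac{g_\nu(\epsilon,\chi)}{g_\nu(\epsilon',\chi)}=e^{c_\nu(\chi_\epsilon-\chi_{\epsilon'})}.$$ Let $k^*,v^*\in\mathbb R^D$ be arbitrary and generate $(L,\epsilon^*,X,y)$ by: $L\sim P_L$; $\epsilon^*\sim\mathrm{Unif}(\{1,\dots,L\})$ given $L$; $X\in\mathbb R^{L\times D}$ with density $g_\nu(\epsilon^*,\frac1{\sqrt D}xk^* )\prod_{\ell}\mathcal N(x_\ell;0,I_D)$ given $(L,\epsilon^* )$; and $y=\frac1{\sqrt D}X_{\epsilon^*}v^*$. For $k,v\in\mathbb R^D$ define the softmax attention predictor $f_{k,v}(X)=\mathrm{softmax}(\chi)^\top z$ with $\chi=\frac1{\sqrt D}Xk\in\mathbb R^L$, $z=\frac1{\sqrt D}Xv\in\mathbb R^L$ and $\mathrm{softmax}(\chi)_\ell=e^{\chi_\ell}/\sum_{\ell'=1}^Le^{\chi_{\ell'}}$.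 Then $$\min_{(k,v)\in(\mathbb R^D)^2}\mathbb E\big[(y-f_{k,v}(X))^2\big]=\mathbb E\big[(y-\mathbb E[y\mid X,L,k^*,v^*])^2\big],$$ where both expectations are over $(L,\epsilon^*,X)$ with $k^*,v^*$ fixed; i.e. the softmax attention class attains the Bayes risk.
   Context: $\mathcal N(x;\omega,V)$ is the Gaussian density. The condition on $g_\nu$ holds for instance for the spiked model $g_\nu(\epsilon,\chi)=e^{\sqrt\nu\chi_\epsilon-\nu/2}$ and the maximum-correlation model $g_\nu(\epsilon,\chi)=Le^{\nu\chi_\epsilon}/\sum_\ell e^{\nu\chi_\ell}$. *)

theory Defs
  imports "HOL-Probability.Probability"
begin

text \<open>Matrices X in R^{L x D} are functions on index pairs (l,d), rows l in {1..L},
 columns d in {1..D}. Vectors in R^D are functions nat => real, components 1..D.\<close>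

definition proj :: "nat \<Rightarrow> nat \<Rightarrow> (nat \<times> nat \<Rightarrow> real) \<Rightarrow> (nat \<Rightarrow> real) \<Rightarrow> (nat \<Rightarrow> real)" where
  "proj D L X w = restrict (\<lambda>l. (\<Sum>d=1..D. X (l, d) * w d) / sqrt (real D)) {1..L}"

definition gauss_dens :: "nat \<Rightarrow> nat \<Rightarrow> (nat \<times> nat \<Rightarrow> real) \<Rightarrow> real" where
  "gauss_dens D L X = (\<Prod>l=1..L. \<Prod>d=1..D. std_normal_density (X (l, d)))"

definition leb_mat :: "nat \<Rightarrow> nat \<Rightarrow> (nat \<times> nat \<Rightarrow> real) measure" where
  "leb_mat D L = PiM ({1..L} \<times> {1..D}) (\<lambda>_. lborel)"

definition softmax_pred :: "nat \<Rightarrow> nat \<Rightarrow> (nat \<Rightarrow> real) \<Rightarrow> (nat \<Rightarrow> real) \<Rightarrow> (nat \<times> nat \<Rightarrow> real) \<Rightarrow> real" where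
  "softmax_pred D L k v X =
     (\<Sum>l=1..L. exp (proj D L X k l) / (\<Sum>l'=1..L. exp (proj D L X k l')) * proj D L X v l)"

text \<open>Common sample space for (L, eps, X); X is padded with zeros outside {1..L} x {1..D}.\<close>
definition sample_space :: "(nat \<times> nat \<times> (nat \<times> nat \<Rightarrow> real)) measure" where
  "sample_space = count_space UNIV \<Otimes>\<^sub>M count_space UNIV \<Otimes>\<^sub>M PiM UNIV (\<lambda>_. (borel :: real measure))"

definition pad :: "nat \<Rightarrow> nat \<Rightarrow> (nat \<times> nat \<Rightarrow> real) \<Rightarrow> (nat \<times> nat \<Rightarrow> real)" where
  "pad D L X = (\<lambda>(l, d). if l \<in> {1..L} \<and> d \<in> {1..D} then X (l, d) else 0)"

definition joint_law ::
  "nat pmf \<Rightarrow> (nat \<Rightarrow> nat \<Rightarrow> (nat \<Rightarrow> real) \<Rightarrow> real) \<Rightarrow> nat \<Rightarrow> (nat \<Rightarrow> real)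
    \<Rightarrow> (nat \<times> nat \<times> (nat \<times> nat \<Rightarrow> real)) measure" where
  "joint_law PL g D kstar =
     bind (measure_pmf PL) (\<lambda>L.
       bind (measure_pmf (pmf_of_set {1..L})) (\<lambda>e.
         distr (density (leb_mat D L) (\<lambda>X. ennreal (g L e (proj D L X kstar) * gauss_dens D L X)))
               sample_space (\<lambda>X. (L, e, pad D L X))))"

definition target :: "nat \<Rightarrow> (nat \<Rightarrow> real) \<Rightarrow> nat \<times> nat \<times> (nat \<times> nat \<Rightarrow> real) \<Rightarrow> real" where
  "target D vstar \<omega> = (case \<omega> of (L, e, X) \<Rightarrow> (\<Sum>d=1..D. X (e, d) * vstar d) / sqrt (real D))"

definition obs_algebra :: "(nat \<times> nat \<times> (nat \<times> nat \<Rightarrow> real)) measure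
    \<Rightarrow> (nat \<times> nat \<times> (nat \<times> nat \<Rightarrow> real)) measure" where
  "obs_algebra M = vimage_algebra (space M) (\<lambda>\<omega>. (fst \<omega>, snd (snd \<omega>)))
      (count_space UNIV \<Otimes>\<^sub>M PiM UNIV (\<lambda>_. (borel :: real measure)))"

end

theory Submission
  imports Defs
begin

(* Given the length L and the matrix X, the index e of the relevant row has posterior weight
   proportional to g L e chi, hence, by the ratio hypothesis, to exp (c chi_e) with
   chi = X kstar / sqrt D.  The posterior mean of the target is therefore the softmax attention
   predictor with key c kstar and value vstar, and the residual of the target against this
   predictor vanishes after weighting with the densities and summing over e, pointwise in X.
   So the residual is orthogonal to every square-integrable function of (L, X): this identifies
   the conditional expectation and gives the Pythagorean decomposition
   risk (k, v) = risk (c kstar, vstar) + E (f_(c kstar, vstar) - f_(k, v))^2.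
   The second moments are finite because the density hypothesis holds for every key: after the
   substitution X = Y / 2 the Gaussian second moment is bounded by the density integral for
   the key 2 kstar. *)

lemma bind_measure_pmf_cong:
  assumes sets_eq: "\<And>x. sets (N x) = sets (N' x)"
    and eq: "\<And>x. x \<in> set_pmf p \<Longrightarrow> N x = N' x"
  shows "bind (measure_pmf p) N = bind (measure_pmf p) N'"
proof -
  let ?x = "SOME x. x \<in> space (measure_pmf p)"
  have "subprob_algebra (N ?x) = subprob_algebra (N' ?x)"
    by (rule subprob_algebra_cong) (rule sets_eq)
  moreover have "emeasure (measure_pmf p) (N -` A \<inter> space (measure_pmf p)) =
      emeasure (measure_pmf p) (N' -` A \<inter> space (measure_pmf p))" for A
  proof -
    have "N -` A \<inter> space (measure_pmf p) \<inter> set_pmf p = N' -` A \<inter> space (measure_pmf p) \<inter> set_pmf p"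
      using eq by auto
    then show ?thesis
      by (metis emeasure_Int_set_pmf)
  qed
  ultimately have "distr (measure_pmf p) (subprob_algebra (N ?x)) N =
      distr (measure_pmf p) (subprob_algebra (N' ?x)) N'"
    unfolding distr_def by simp
  then show ?thesis
    by (simp add: bind_def)
qed

text \<open>Unlike \<open>nn_integral_bind\<close>, the kernel only has to be a sub-probability measure on the support.\<close>

lemma nn_integral_bind_measure_pmf:
  assumes fin: "finite (set_pmf p)"
    and sets_N: "\<And>x. sets (N x) = sets B"
    and subprob: "\<And>x. x \<in> set_pmf p \<Longrightarrow> subprob_space (N x)"
    and f: "f \<in> borel_measurable B"
  shows "(\<integral>\<^sup>+y. f y \<partial>bind (measure_pmf p) N) = (\<Sum>x\<in>set_pmf p. pmf p x * (\<integral>\<^sup>+y. f y \<partial>N x))"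
proof -
  obtain x0 where x0: "x0 \<in> set_pmf p"
    using set_pmf_not_empty[of p] by blast
  define N' where "N' x = (if x \<in> set_pmf p then N x else N x0)" for x
  have "bind (measure_pmf p) N = bind (measure_pmf p) N'"
    by (rule bind_measure_pmf_cong) (simp_all add: N'_def sets_N)
  moreover have "N' \<in> measurable (measure_pmf p) (subprob_algebra B)"
    using subprob x0 by (auto simp: N'_def space_subprob_algebra sets_N)
  ultimately have "(\<integral>\<^sup>+y. f y \<partial>bind (measure_pmf p) N) = (\<integral>\<^sup>+x. (\<integral>\<^sup>+y. f y \<partial>N' x) \<partial>measure_pmf p)"
    by (simp add: nn_integral_bind[OF f])
  also have "\<dots> = (\<Sum>x\<in>set_pmf p. pmf p x * (\<integral>\<^sup>+y. f y \<partial>N x))"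
    by (simp add: nn_integral_measure_pmf_finite[OF fin] N'_def mult.commute)
  finally show ?thesis .
qed

lemma nn_integral_lborel_scale:
  fixes c :: real
  assumes "0 < c" and "F \<in> borel_measurable borel"
  shows "(\<integral>\<^sup>+y. F (c * y) \<partial>lborel) = ennreal (1 / c) * (\<integral>\<^sup>+y. F y \<partial>lborel)"
  using nn_integral_real_affine[OF assms(2), of c 0] assms(1)
  by (simp add: mult.assoc[symmetric] flip: ennreal_mult)

lemma nn_integral_PiM_lborel_scale:
  fixes c :: real
  assumes c: "0 < c" and I: "finite I"
    and f: "f \<in> borel_measurable (PiM I (\<lambda>_. lborel))"
  shows "(\<integral>\<^sup>+x. f (\<lambda>i\<in>I. c * x i) \<partial>PiM I (\<lambda>_. lborel))
     = ennreal ((1 / c) ^ card I) * (\<integral>\<^sup>+x. f x \<partial>PiM I (\<lambda>_. lborel))"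
  using I f
proof (induction I arbitrary: f rule: finite_induct)
  case empty
  have "(\<lambda>i\<in>{}. c * x i) = (\<lambda>_. undefined)" for x :: "'a \<Rightarrow> real"
    by auto
  then show ?case
    by (simp add: PiM_empty nn_integral_count_space_finite)
next
  case (insert i I)
  interpret product_sigma_finite "\<lambda>_::'a. lborel"
    by unfold_locales
  note insert.prems[measurable]
  have scale[measurable]: "(\<lambda>x. \<lambda>j\<in>J. c * x j) \<in> measurable (PiM J (\<lambda>_. lborel)) (PiM J (\<lambda>_. lborel))" for J :: "'a set"
    by (rule measurable_restrict) auto
  define H where "H z = (\<integral>\<^sup>+y. f (z(i := y)) \<partial>lborel)" for z
  have H_measurable[measurable]: "H \<in> borel_measurable (PiM I (\<lambda>_. lborel))"
    unfolding H_def
    using measurable_compose[OF measurable_add_dim[of i I "\<lambda>_. lborel"] insert.prems]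
    by (intro lborel.borel_measurable_nn_integral) (simp add: split_beta')
  have inner: "(\<integral>\<^sup>+y. f (\<lambda>j\<in>insert i I. c * (x(i := y)) j) \<partial>lborel) =
      ennreal (1 / c) * H (\<lambda>j\<in>I. c * x j)" for x
  proof -
    have update: "(\<lambda>j\<in>insert i I. c * (x(i := y)) j) = (\<lambda>j\<in>I. c * x j)(i := c * y)" for y
      using insert.hyps by (auto simp: restrict_def)
    have "(\<lambda>y. (\<lambda>j\<in>I. c * x j)(i := y)) \<in> measurable lborel (PiM (insert i I) (\<lambda>_. lborel))"
      by (rule measurable_component_update) (auto simp: space_PiM insert.hyps)
    then have "(\<lambda>y. f ((\<lambda>j\<in>I. c * x j)(i := y))) \<in> borel_measurable borel"
      using measurable_compose insert.prems by simp
    then show ?thesis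
      unfolding H_def update by (rule nn_integral_lborel_scale[OF c])
  qed
  have "(\<integral>\<^sup>+x. f (\<lambda>j\<in>insert i I. c * x j) \<partial>PiM (insert i I) (\<lambda>_. lborel))
     = (\<integral>\<^sup>+x. (\<integral>\<^sup>+y. f (\<lambda>j\<in>insert i I. c * (x(i := y)) j) \<partial>lborel) \<partial>PiM I (\<lambda>_. lborel))"
    by (rule product_nn_integral_insert[OF insert.hyps]) measurable
  also have "\<dots> = ennreal (1 / c) * (\<integral>\<^sup>+x. H (\<lambda>j\<in>I. c * x j) \<partial>PiM I (\<lambda>_. lborel))"
    unfolding inner by (rule nn_integral_cmult) measurable
  also have "\<dots> = ennreal (1 / c) * (ennreal ((1 / c) ^ card I) * (\<integral>\<^sup>+x. H x \<partial>PiM I (\<lambda>_. lborel)))"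
    by (simp only: insert.IH[OF H_measurable])
  also have "(\<integral>\<^sup>+x. H x \<partial>PiM I (\<lambda>_. lborel)) = (\<integral>\<^sup>+x. f x \<partial>PiM (insert i I) (\<lambda>_. lborel))"
    unfolding H_def by (rule product_nn_integral_insert[symmetric]) (use insert in auto)
  finally show ?case
    using insert.hyps c by (simp add: mult.assoc[symmetric] ennreal_mult'[symmetric] flip: ennreal_mult)
qed

lemma integrable_mult_of_square_integrable:
  fixes f g :: "'a \<Rightarrow> real"
  assumes [measurable]: "f \<in> borel_measurable M" "g \<in> borel_measurable M"
    and "integrable M (\<lambda>x. (f x)\<^sup>2)" "integrable M (\<lambda>x. (g x)\<^sup>2)"
  shows "integrable M (\<lambda>x. f x * g x)"
proof (rule Bochner_Integration.integrable_bound)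
  show "integrable M (\<lambda>x. (f x)\<^sup>2 + (g x)\<^sup>2)"
    using assms(3,4) by simp
  show "AE x in M. norm (f x * g x) \<le> norm ((f x)\<^sup>2 + (g x)\<^sup>2)"
  proof (rule AE_I2)
    fix x
    have "\<bar>f x * g x\<bar> \<le> 2 * (\<bar>f x\<bar> * \<bar>g x\<bar>)"
      by (simp add: abs_mult)
    also have "\<dots> \<le> (f x)\<^sup>2 + (g x)\<^sup>2"
      using sum_squares_bound[of "\<bar>f x\<bar>" "\<bar>g x\<bar>"] by (simp add: mult.assoc)
    finally show "norm (f x * g x) \<le> norm ((f x)\<^sup>2 + (g x)\<^sup>2)"
      by simp
  qed
qed measurable

lemma integrable_square_diff:
  fixes f g :: "'a \<Rightarrow> real"
  assumes "f \<in> borel_measurable M" "g \<in> borel_measurable M"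
    and "integrable M (\<lambda>x. (f x)\<^sup>2)" "integrable M (\<lambda>x. (g x)\<^sup>2)"
  shows "integrable M (\<lambda>x. (f x - g x)\<^sup>2)"
proof -
  have "(\<lambda>x. (f x - g x)\<^sup>2) = (\<lambda>x. (f x)\<^sup>2 + (g x)\<^sup>2 - 2 * (f x * g x))"
    by (simp add: fun_eq_iff power2_diff mult.assoc)
  then show ?thesis
    using integrable_mult_of_square_integrable[OF assms] assms(3,4) by simp
qed

lemma nn_integral_square_le_of_orthogonal:
  fixes a b :: "'a \<Rightarrow> real"
  assumes [measurable]: "a \<in> borel_measurable M" "b \<in> borel_measurable M"
    and sq: "integrable M (\<lambda>x. (a x)\<^sup>2)" "integrable M (\<lambda>x. (b x)\<^sup>2)"
    and orth: "(\<integral>x. a x * b x \<partial>M) = 0"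
  shows "(\<integral>\<^sup>+x. ennreal ((a x)\<^sup>2) \<partial>M) \<le> (\<integral>\<^sup>+x. ennreal ((a x + b x)\<^sup>2) \<partial>M)"
proof -
  have ab: "integrable M (\<lambda>x. 2 * (a x * b x))"
    using integrable_mult_of_square_integrable[OF assms(1-4)] by simp
  have sum_sq: "integrable M (\<lambda>x. (a x)\<^sup>2 + (b x)\<^sup>2)"
    using sq by simp
  have expand: "(\<lambda>x. (a x + b x)\<^sup>2) = (\<lambda>x. ((a x)\<^sup>2 + (b x)\<^sup>2) + 2 * (a x * b x))"
    by (simp add: power2_sum fun_eq_iff)
  have "(\<integral>x. (a x + b x)\<^sup>2 \<partial>M) = (\<integral>x. (a x)\<^sup>2 \<partial>M) + (\<integral>x. (b x)\<^sup>2 \<partial>M)"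
    unfolding expand using sq sum_sq ab orth by simp
  then have "(\<integral>x. (a x)\<^sup>2 \<partial>M) \<le> (\<integral>x. (a x + b x)\<^sup>2 \<partial>M)"
    by simp
  moreover have "integrable M (\<lambda>x. (a x + b x)\<^sup>2)"
    unfolding expand using sum_sq ab by (rule Bochner_Integration.integrable_add)
  ultimately show ?thesis
    using sq by (simp add: nn_integral_eq_integral)
qed

lemma (in finite_measure) real_cond_exp_vimage_algebra_charact:
  assumes T: "T \<in> measurable M N" and h[measurable]: "h \<in> borel_measurable N"
    and f: "integrable M f" and hT: "integrable M (\<lambda>x. h (T x))"
    and orth: "\<And>B. B \<in> sets N \<Longrightarrow> (\<integral>x. (f x - h (T x)) * indicator B (T x) \<partial>M) = 0"
  shows "AE x in M. real_cond_exp M (vimage_algebra (space M) T N) f x = h (T x)"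
proof -
  let ?F = "vimage_algebra (space M) T N"
  have T_space: "T \<in> space M \<rightarrow> space N"
    using T by (rule measurable_space[THEN Pi_I])
  interpret finite_measure_subalgebra M ?F
    by unfold_locales (simp add: subalgebra_def sets_image_in_sets[OF refl T])
  show ?thesis
  proof (rule real_cond_exp_charact[OF _ f hT])
    fix A assume "A \<in> sets ?F"
    then obtain B where B: "B \<in> sets N" and A: "A = T -` B \<inter> space M"
      by (auto simp: sets_vimage_algebra2[OF T_space])
    have A_sets: "A \<in> sets M"
      using A B T by simp
    have "(\<integral>x\<in>A. f x \<partial>M) - (\<integral>x\<in>A. h (T x) \<partial>M) =
        (\<integral>x. indicator A x * f x - indicator A x * h (T x) \<partial>M)"
      using integrable_mult_indicator[OF A_sets f] integrable_mult_indicator[OF A_sets hT]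
      by (simp add: set_lebesgue_integral_def)
    also have "\<dots> = (\<integral>x. (f x - h (T x)) * indicator B (T x) \<partial>M)"
      by (rule Bochner_Integration.integral_cong) (auto simp: A indicator_def)
    finally show "(\<integral>x\<in>A. f x \<partial>M) = (\<integral>x\<in>A. h (T x) \<partial>M)"
      using orth[OF B] by simp
  next
    show "(\<lambda>x. h (T x)) \<in> borel_measurable ?F"
      using measurable_vimage_algebra1[OF T_space] by measurable
  qed
qed

lemma sum_ennreal_weighted_eq_uminus:
  fixes w a :: "'a \<Rightarrow> real"
  assumes w: "\<And>i. i \<in> I \<Longrightarrow> 0 \<le> w i" and sum_zero: "(\<Sum>i\<in>I. w i * a i) = 0"
  shows "(\<Sum>i\<in>I. ennreal (w i) * ennreal (a i)) = (\<Sum>i\<in>I. ennreal (w i) * ennreal (- a i))"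
proof -
  have pos_part: "(\<Sum>i\<in>I. ennreal (w i) * ennreal (b i)) = ennreal (\<Sum>i\<in>I. w i * max 0 (b i))" for b
  proof -
    have "(\<Sum>i\<in>I. ennreal (w i) * ennreal (b i)) = (\<Sum>i\<in>I. ennreal (w i * max 0 (b i)))"
      using w by (intro sum.cong) (simp_all add: ennreal_mult')
    then show ?thesis
      using w by (simp add: sum_nonneg)
  qed
  have "(\<Sum>i\<in>I. w i * max 0 (a i)) - (\<Sum>i\<in>I. w i * max 0 (- a i)) = (\<Sum>i\<in>I. w i * a i)"
    by (subst sum_subtractf[symmetric]) (rule sum.cong; auto simp: max_def)
  then show ?thesis
    unfolding pos_part using sum_zero by simp
qed

lemma sum_weighted_deviation_from_mean:
  fixes w z :: "'a \<Rightarrow> real"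
  assumes "(\<Sum>i\<in>I. w i) \<noteq> 0"
  shows "(\<Sum>i\<in>I. w i * (z i - (\<Sum>j\<in>I. w j * z j) / (\<Sum>j\<in>I. w j))) = 0"
  using assms by (simp add: right_diff_distrib sum_subtractf flip: sum_distrib_right sum_divide_distrib)

definition frob_sq :: "nat \<Rightarrow> nat \<Rightarrow> (nat \<times> nat \<Rightarrow> real) \<Rightarrow> real" where
  "frob_sq D L X = (\<Sum>p\<in>{1..L} \<times> {1..D}. (X p)\<^sup>2)"

abbreviation obs_space :: "(nat \<times> (nat \<times> nat \<Rightarrow> real)) measure" where
  "obs_space \<equiv> count_space UNIV \<Otimes>\<^sub>M PiM UNIV (\<lambda>_. borel)"

lemma proj_pad: "proj D L (pad D L X) w = proj D L X w"
  unfolding proj_def pad_def by (intro restrict_ext arg_cong2[where f = "(/)"] sum.cong) auto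

lemma softmax_pred_pad: "softmax_pred D L k v (pad D L X) = softmax_pred D L k v X"
  unfolding softmax_pred_def proj_pad ..

lemma frob_sq_pad: "frob_sq D L (pad D L X) = frob_sq D L X"
  unfolding frob_sq_def pad_def by (intro sum.cong) auto

lemma target_pad: "e \<in> {1..L} \<Longrightarrow> target D v (L, e, pad D L X) = proj D L X v e"
  unfolding target_def proj_def pad_def by (auto intro!: arg_cong2[where f = "(/)"] sum.cong)

lemma proj_cmult: "l \<in> {1..L} \<Longrightarrow> proj D L X (\<lambda>d. c * w d) l = c * proj D L X w l"
  unfolding proj_def by (simp add: sum_distrib_left mult_ac)

lemma proj_in_PiE: "proj D L X w \<in> PiE {1..L} (\<lambda>_. UNIV)"
  by (simp add: proj_def)

lemma sets_leb_mat: "sets (leb_mat D L) = sets (PiM ({1..L} \<times> {1..D}) (\<lambda>_. borel))"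
  unfolding leb_mat_def by (intro sets_PiM_cong) simp_all

lemma pad_measurable[measurable]:
  "pad D L \<in> measurable (leb_mat D L) (PiM UNIV (\<lambda>_. borel))"
  unfolding measurable_cong_sets[OF sets_leb_mat refl]
proof (rule measurable_PiM_single')
  fix i :: "nat \<times> nat"
  show "(\<lambda>X. pad D L X i) \<in> borel_measurable (PiM ({1..L} \<times> {1..D}) (\<lambda>_. borel))"
    by (cases i; cases "i \<in> {1..L} \<times> {1..D}") (auto simp: pad_def intro: measurable_PiM_component_rev)
qed (auto simp: pad_def)

lemma pad_sample_measurable[measurable]:
  "(\<lambda>X. (L, e, pad D L X)) \<in> measurable (leb_mat D L) sample_space"
  unfolding sample_space_def by measurable

lemma proj_measurable[measurable]:
  "(\<lambda>X. proj D L X w) \<in> measurable (PiM UNIV (\<lambda>_. borel)) (PiM {1..L} (\<lambda>_. borel))"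
  unfolding proj_def by (rule measurable_restrict) measurable

lemma softmax_pred_measurable[measurable]:
  "softmax_pred D L k v \<in> borel_measurable (PiM UNIV (\<lambda>_. borel))"
  unfolding softmax_pred_def by measurable

lemma frob_sq_measurable[measurable]:
  "frob_sq D L \<in> borel_measurable (PiM UNIV (\<lambda>_. borel))"
  unfolding frob_sq_def by measurable

lemma gauss_dens_measurable[measurable]: "gauss_dens D L \<in> borel_measurable (leb_mat D L)"
  unfolding gauss_dens_def measurable_cong_sets[OF sets_leb_mat refl] by measurable

lemma target_measurable[measurable]: "target D v \<in> borel_measurable sample_space"
proof -
  have "(\<lambda>\<omega>. (\<lambda>e \<omega>. (\<Sum>d=1..D. snd (snd \<omega>) (e, d) * v d) / sqrt (real D)) (fst (snd \<omega>)) \<omega>)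
      \<in> borel_measurable sample_space"
    unfolding sample_space_def by (rule measurable_compose_countable) measurable
  then show ?thesis
    by (simp add: target_def[abs_def] case_prod_beta')
qed

lemma obs_measurable[measurable]:
  "(\<lambda>\<omega>. (fst \<omega>, snd (snd \<omega>))) \<in> measurable sample_space obs_space"
  unfolding sample_space_def by measurable

lemma frob_sq_nonneg: "0 \<le> frob_sq D L X"
  unfolding frob_sq_def by (simp add: sum_nonneg)

lemma row_sum_sq_le_frob_sq:
  assumes "l \<in> {1..L}"
  shows "(\<Sum>d=1..D. (X (l, d))\<^sup>2) \<le> frob_sq D L X"
proof -
  have "(\<Sum>d=1..D. (X (l, d))\<^sup>2) \<le> (\<Sum>l'=1..L. \<Sum>d=1..D. (X (l', d))\<^sup>2)"
    by (rule member_le_sum[OF assms]) (simp_all add: sum_nonneg)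
  also have "\<dots> = frob_sq D L X"
    unfolding frob_sq_def by (simp add: sum.cartesian_product)
  finally show ?thesis .
qed

lemma proj_square_le:
  assumes "l \<in> {1..L}"
  shows "(proj D L X w l)\<^sup>2 \<le> (\<Sum>d=1..D. (w d)\<^sup>2) / real D * frob_sq D L X"
proof -
  have "(proj D L X w l)\<^sup>2 = (\<Sum>d=1..D. X (l, d) * w d)\<^sup>2 / real D"
    using assms by (simp add: proj_def power_divide)
  also have "\<dots> \<le> (\<Sum>d=1..D. (X (l, d))\<^sup>2) * (\<Sum>d=1..D. (w d)\<^sup>2) / real D"
    by (intro divide_right_mono Cauchy_Schwarz_ineq_sum) simp
  also have "\<dots> \<le> frob_sq D L X * (\<Sum>d=1..D. (w d)\<^sup>2) / real D"
    by (intro divide_right_mono mult_right_mono row_sum_sq_le_frob_sq assms) (simp_all add: sum_nonneg)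
  finally show ?thesis
    by (simp add: mult_ac)
qed

lemma abs_softmax_pred_le:
  assumes "0 \<le> B" and "\<And>l. l \<in> {1..L} \<Longrightarrow> \<bar>proj D L X v l\<bar> \<le> B"
  shows "\<bar>softmax_pred D L k v X\<bar> \<le> B"
proof -
  define p where "p l = exp (proj D L X k l) / (\<Sum>l'=1..L. exp (proj D L X k l'))" for l
  have p_nonneg: "0 \<le> p l" for l
    unfolding p_def by (simp add: sum_nonneg)
  have "sum p {1..L} \<le> 1"
    by (cases "L = 0") (simp_all add: p_def flip: sum_divide_distrib)
  have "\<bar>softmax_pred D L k v X\<bar> \<le> (\<Sum>l=1..L. p l * \<bar>proj D L X v l\<bar>)"
    unfolding softmax_pred_def p_def[symmetric]
    by (rule order_trans[OF sum_abs]) (simp add: abs_mult p_nonneg)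
  also have "\<dots> \<le> (\<Sum>l=1..L. p l * B)"
    by (intro sum_mono mult_left_mono assms(2) p_nonneg)
  also have "\<dots> = sum p {1..L} * B"
    by (simp add: sum_distrib_right)
  also have "\<dots> \<le> B"
    using \<open>sum p {1..L} \<le> 1\<close> assms(1) by (simp add: mult_left_le_one_le sum_nonneg p_nonneg)
  finally show ?thesis .
qed

lemma softmax_pred_square_le:
  "(softmax_pred D L k v X)\<^sup>2 \<le> (\<Sum>d=1..D. (v d)\<^sup>2) / real D * frob_sq D L X"
  (is "_ \<le> ?C")
proof -
  have C_nonneg: "0 \<le> ?C"
    by (simp add: sum_nonneg frob_sq_nonneg)
  have proj_le: "\<bar>proj D L X v l\<bar> \<le> sqrt ?C" if "l \<in> {1..L}" for l
    using proj_square_le[OF that, of D X v] by (intro real_le_rsqrt) simp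
  have "\<bar>softmax_pred D L k v X\<bar> \<le> sqrt ?C"
    by (rule abs_softmax_pred_le[OF real_sqrt_ge_zero[OF C_nonneg] proj_le])
  then show ?thesis
    using power_mono[OF _ abs_ge_zero, of _ "sqrt ?C" 2] C_nonneg by simp
qed

lemma gauss_dens_mult_frob_sq_le:
  "gauss_dens D L X * frob_sq D L X \<le> 8/3 * gauss_dens D L (\<lambda>p. X p / 2)"
proof -
  let ?q = "frob_sq D L X"
  have split: "std_normal_density x = std_normal_density (x / 2) * exp (- 3 * x\<^sup>2 / 8)" for x :: real
  proof -
    have "- x\<^sup>2 / 2 = - (x / 2)\<^sup>2 / 2 + - 3 * x\<^sup>2 / 8"
      by (simp add: power_divide)
    then show ?thesis
      unfolding std_normal_density_def by (simp only: exp_add)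
  qed
  have "gauss_dens D L X = gauss_dens D L (\<lambda>p. X p / 2) * (\<Prod>p\<in>{1..L} \<times> {1..D}. exp (- 3 * (X p)\<^sup>2 / 8))"
    unfolding gauss_dens_def prod.cartesian_product by (subst split) (simp add: prod.distrib)
  also have "(\<Prod>p\<in>{1..L} \<times> {1..D}. exp (- 3 * (X p)\<^sup>2 / 8)) = exp (- 3 * ?q / 8)"
    unfolding frob_sq_def by (simp add: exp_sum sum_divide_distrib sum_distrib_left)
  finally have gauss_eq: "gauss_dens D L X = gauss_dens D L (\<lambda>p. X p / 2) * exp (- 3 * ?q / 8)" .
  have "?q \<le> 8/3 * exp (3 * ?q / 8)"
    using exp_ge_add_one_self[of "3 * ?q / 8"] by linarith
  then have "?q * exp (- 3 * ?q / 8) \<le> 8/3"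
    by (simp add: exp_minus field_simps)
  moreover have "0 \<le> gauss_dens D L (\<lambda>p. X p / 2)"
    unfolding gauss_dens_def by (simp add: prod_nonneg)
  ultimately have "gauss_dens D L (\<lambda>p. X p / 2) * (?q * exp (- 3 * ?q / 8)) \<le> gauss_dens D L (\<lambda>p. X p / 2) * (8/3)"
    by (rule mult_left_mono)
  then show ?thesis
    by (simp add: gauss_eq mult_ac)
qed

section \<open>The joint law of the attention model\<close>

locale attention_model =
  fixes D :: nat and PL :: "nat pmf" and g :: "nat \<Rightarrow> nat \<Rightarrow> (nat \<Rightarrow> real) \<Rightarrow> real"
    and c :: real and kstar :: "nat \<Rightarrow> real"
  assumes PL_finite: "finite (set_pmf PL)"
    and PL_pos: "\<And>L. L \<in> set_pmf PL \<Longrightarrow> 1 \<le> L"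
    and g_meas: "\<And>L e. L \<ge> 1 \<Longrightarrow> e \<in> {1..L} \<Longrightarrow>
        g L e \<in> borel_measurable (PiM {1..L} (\<lambda>_. (borel :: real measure)))"
    and g_nonneg: "\<And>L e ch. L \<ge> 1 \<Longrightarrow> e \<in> {1..L} \<Longrightarrow>
        ch \<in> PiE {1..L} (\<lambda>_. UNIV) \<Longrightarrow> g L e ch \<ge> 0"
    and g_density: "\<And>k L e. L \<ge> 1 \<Longrightarrow> e \<in> {1..L} \<Longrightarrow>
        (\<integral>\<^sup>+ X. ennreal (g L e (proj D L X k) * gauss_dens D L X) \<partial>leb_mat D L) = 1"
    and g_ratio: "\<And>L e e' ch. L \<ge> 1 \<Longrightarrow> e \<in> {1..L} \<Longrightarrow> e' \<in> {1..L} \<Longrightarrow>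
        ch \<in> PiE {1..L} (\<lambda>_. UNIV) \<Longrightarrow>
        g L e ch / g L e' ch = exp (c * (ch e - ch e'))"
begin

abbreviation law :: "(nat \<times> nat \<times> (nat \<times> nat \<Rightarrow> real)) measure" where
  "law \<equiv> joint_law PL g D kstar"

definition dens :: "nat \<Rightarrow> nat \<Rightarrow> (nat \<times> nat \<Rightarrow> real) \<Rightarrow> real" where
  "dens L e X = g L e (proj D L X kstar) * gauss_dens D L X"

text \<open>The ratio hypothesis for \<open>e = e'\<close> rules out zeros of \<open>g\<close>, since \<open>0 / 0 = 0\<close>.\<close>

lemma g_pos:
  assumes "1 \<le> L" "e \<in> {1..L}"
  shows "0 < g L e (proj D L X w)"
  using g_ratio[OF assms assms(2) proj_in_PiE[of D L X w]] g_nonneg[OF assms proj_in_PiE[of D L X w]]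
  by (cases "g L e (proj D L X w) = 0") auto

lemma dens_nonneg: "1 \<le> L \<Longrightarrow> e \<in> {1..L} \<Longrightarrow> 0 \<le> dens L e X"
  unfolding dens_def gauss_dens_def by (simp add: g_pos less_imp_le prod_nonneg)

lemma g_proj_measurable[measurable]:
  assumes "1 \<le> L" "e \<in> {1..L}"
  shows "(\<lambda>X. g L e (proj D L X w)) \<in> borel_measurable (leb_mat D L)"
proof -
  have "(\<lambda>X. g L e (proj D L (pad D L X) w)) \<in> borel_measurable (leb_mat D L)"
    using g_meas[OF assms] by measurable
  then show ?thesis
    unfolding proj_pad .
qed

lemma dens_measurable[measurable]:
  assumes "1 \<le> L" "e \<in> {1..L}"
  shows "dens L e \<in> borel_measurable (leb_mat D L)"
  unfolding dens_def[abs_def] using g_proj_measurable[OF assms] by measurable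

lemma nn_integral_dens: "1 \<le> L \<Longrightarrow> e \<in> {1..L} \<Longrightarrow> (\<integral>\<^sup>+X. ennreal (dens L e X) \<partial>leb_mat D L) = 1"
  unfolding dens_def by (rule g_density)

lemma nn_integral_sum_dens:
  assumes "1 \<le> L"
  shows "(\<integral>\<^sup>+X. (\<Sum>e=1..L. ennreal (dens L e X)) \<partial>leb_mat D L) = of_nat L"
proof -
  have "(\<lambda>X. ennreal (dens L e X)) \<in> borel_measurable (leb_mat D L)" if "e \<in> {1..L}" for e
    using dens_measurable[OF assms that] by measurable
  then have "(\<integral>\<^sup>+X. (\<Sum>e=1..L. ennreal (dens L e X)) \<partial>leb_mat D L) = (\<Sum>e=1..L. 1)"
    by (subst nn_integral_sum) (simp_all add: nn_integral_dens assms)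
  then show ?thesis
    by simp
qed

lemma sum_dens_mult_residual:
  assumes "1 \<le> L"
  shows "(\<Sum>e=1..L. dens L e X * (proj D L X v e - softmax_pred D L (\<lambda>d. c * kstar d) v X)) = 0"
proof -
  define s where "s e = exp (c * proj D L X kstar e)" for e
  define K where "K = dens L 1 X / s 1"
  have one: "1 \<in> {1..L}"
    using assms by simp
  have dens_eq: "dens L e X = K * s e" if e: "e \<in> {1..L}" for e
  proof -
    have "g L e (proj D L X kstar) / g L 1 (proj D L X kstar) = s e / s 1"
      using g_ratio[OF assms e one proj_in_PiE] by (simp add: s_def right_diff_distrib exp_diff)
    then show ?thesis
      using g_pos[OF assms one, of X kstar] by (simp add: K_def dens_def s_def field_simps)
  qed
  have "softmax_pred D L (\<lambda>d. c * kstar d) v X = (\<Sum>e=1..L. s e * proj D L X v e) / (\<Sum>e=1..L. s e)"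
    unfolding softmax_pred_def s_def by (simp add: proj_cmult sum_divide_distrib)
  moreover have "0 < (\<Sum>e=1..L. s e)"
    using one by (intro sum_pos) (auto simp: s_def)
  ultimately have "(\<Sum>e=1..L. s e * (proj D L X v e - softmax_pred D L (\<lambda>d. c * kstar d) v X)) = 0"
    by (simp add: sum_weighted_deviation_from_mean less_imp_neq[symmetric])
  then show ?thesis
    by (simp add: dens_eq mult.assoc flip: sum_distrib_left)
qed

definition law_given_index :: "nat \<Rightarrow> nat \<Rightarrow> (nat \<times> nat \<times> (nat \<times> nat \<Rightarrow> real)) measure" where
  "law_given_index L e =
     distr (density (leb_mat D L) (\<lambda>X. ennreal (dens L e X))) sample_space (\<lambda>X. (L, e, pad D L X))"

definition law_given_length :: "nat \<Rightarrow> (nat \<times> nat \<times> (nat \<times> nat \<Rightarrow> real)) measure" where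
  "law_given_length L = bind (measure_pmf (pmf_of_set {1..L})) (law_given_index L)"

lemma law_eq: "law = bind (measure_pmf PL) law_given_length"
  unfolding joint_law_def law_given_length_def law_given_index_def dens_def ..

lemma sets_law_given_index[simp]: "sets (law_given_index L e) = sets sample_space"
  by (simp add: law_given_index_def)

lemma sets_law_given_length: "sets (law_given_length L) = sets sample_space"
  unfolding law_given_length_def by (rule sets_bind) auto

lemma sets_law[simp, measurable_cong]: "sets law = sets sample_space"
  unfolding law_eq by (rule sets_bind) (auto simp: sets_law_given_length)

lemma nn_integral_law_given_index:
  assumes "1 \<le> L" "e \<in> {1..L}" and [measurable]: "\<psi> \<in> borel_measurable sample_space"
  shows "(\<integral>\<^sup>+\<omega>. \<psi> \<omega> \<partial>law_given_index L e) =
    (\<integral>\<^sup>+X. ennreal (dens L e X) * \<psi> (L, e, pad D L X) \<partial>leb_mat D L)"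
  unfolding law_given_index_def using dens_measurable[OF assms(1,2)]
  by (simp add: nn_integral_distr nn_integral_density)

lemma nn_integral_law_given_length:
  assumes L: "1 \<le> L" and [measurable]: "\<psi> \<in> borel_measurable sample_space"
  shows "(\<integral>\<^sup>+\<omega>. \<psi> \<omega> \<partial>law_given_length L) =
    ennreal (1 / real L) * (\<integral>\<^sup>+X. (\<Sum>e=1..L. ennreal (dens L e X) * \<psi> (L, e, pad D L X)) \<partial>leb_mat D L)"
proof -
  have measurable: "(\<lambda>X. ennreal (dens L e X) * \<psi> (L, e, pad D L X)) \<in> borel_measurable (leb_mat D L)"
    if "e \<in> {1..L}" for e
    using dens_measurable[OF L that] by measurable
  have "prob_space (law_given_index L e)" if "e \<in> {1..L}" for e
    using nn_integral_law_given_index[OF L that, of "\<lambda>_. 1"] nn_integral_dens[OF L that]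
    by (intro prob_spaceI) (simp add: law_given_index_def emeasure_distr emeasure_density)
  then have "(\<integral>\<^sup>+\<omega>. \<psi> \<omega> \<partial>law_given_length L) =
      (\<Sum>e\<in>set_pmf (pmf_of_set {1..L}). pmf (pmf_of_set {1..L}) e * (\<integral>\<^sup>+\<omega>. \<psi> \<omega> \<partial>law_given_index L e))"
    unfolding law_given_length_def using L
    by (intro nn_integral_bind_measure_pmf[where B = sample_space]) (auto simp: prob_space_imp_subprob_space)
  also have "\<dots> = (\<Sum>e=1..L. ennreal (1 / real L) *
      (\<integral>\<^sup>+X. ennreal (dens L e X) * \<psi> (L, e, pad D L X) \<partial>leb_mat D L))"
    using L by (intro sum.cong) (auto simp: nn_integral_law_given_index)
  also have "\<dots> = ennreal (1 / real L) *
      (\<integral>\<^sup>+X. (\<Sum>e=1..L. ennreal (dens L e X) * \<psi> (L, e, pad D L X)) \<partial>leb_mat D L)"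
    by (subst nn_integral_sum[OF measurable]) (simp_all add: sum_distrib_left)
  finally show ?thesis .
qed

lemma nn_integral_law:
  assumes [measurable]: "\<psi> \<in> borel_measurable sample_space"
  shows "(\<integral>\<^sup>+\<omega>. \<psi> \<omega> \<partial>law) = (\<Sum>L\<in>set_pmf PL. ennreal (pmf PL L / real L) *
    (\<integral>\<^sup>+X. (\<Sum>e=1..L. ennreal (dens L e X) * \<psi> (L, e, pad D L X)) \<partial>leb_mat D L))"
proof -
  have "prob_space (law_given_length L)" if "L \<in> set_pmf PL" for L
  proof
    from nn_integral_sum_dens[OF PL_pos[OF that]]
    show "emeasure (law_given_length L) (space (law_given_length L)) = 1"
      using nn_integral_law_given_length[OF PL_pos[OF that], of "\<lambda>_. 1"] PL_pos[OF that]
      by (simp add: sets_eq_imp_space_eq[OF sets_law_given_length] ennreal_of_nat_eq_real_of_nat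
          flip: ennreal_mult)
  qed
  then have "(\<integral>\<^sup>+\<omega>. \<psi> \<omega> \<partial>law) = (\<Sum>L\<in>set_pmf PL. pmf PL L * (\<integral>\<^sup>+\<omega>. \<psi> \<omega> \<partial>law_given_length L))"
    unfolding law_eq
    by (intro nn_integral_bind_measure_pmf[where B = sample_space] PL_finite)
       (auto simp: sets_law_given_length prob_space_imp_subprob_space)
  also have "\<dots> = (\<Sum>L\<in>set_pmf PL. ennreal (pmf PL L / real L) *
      (\<integral>\<^sup>+X. (\<Sum>e=1..L. ennreal (dens L e X) * \<psi> (L, e, pad D L X)) \<partial>leb_mat D L))"
  proof (intro sum.cong refl)
    fix L assume L: "L \<in> set_pmf PL"
    have "ennreal (pmf PL L / real L) = ennreal (pmf PL L) * ennreal (1 / real L)"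
      by (subst ennreal_mult[symmetric]) simp_all
    then show "ennreal (pmf PL L) * (\<integral>\<^sup>+\<omega>. \<psi> \<omega> \<partial>law_given_length L) =
        ennreal (pmf PL L / real L) *
        (\<integral>\<^sup>+X. (\<Sum>e=1..L. ennreal (dens L e X) * \<psi> (L, e, pad D L X)) \<partial>leb_mat D L)"
      unfolding nn_integral_law_given_length[OF PL_pos[OF L] assms] by (simp add: mult.assoc)
  qed
  finally show ?thesis .
qed

lemma prob_space_law: "prob_space law"
proof
  have "(\<integral>\<^sup>+\<omega>. 1 \<partial>law) = (\<Sum>L\<in>set_pmf PL. ennreal (pmf PL L / real L) *
      (\<integral>\<^sup>+X. (\<Sum>e=1..L. ennreal (dens L e X)) \<partial>leb_mat D L))"
    using nn_integral_law[of "\<lambda>_. 1"] by simp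
  also have "\<dots> = (\<Sum>L\<in>set_pmf PL. ennreal (pmf PL L))"
  proof (intro sum.cong refl)
    fix L assume L: "L \<in> set_pmf PL"
    show "ennreal (pmf PL L / real L) * (\<integral>\<^sup>+X. (\<Sum>e=1..L. ennreal (dens L e X)) \<partial>leb_mat D L) =
        ennreal (pmf PL L)"
      unfolding nn_integral_sum_dens[OF PL_pos[OF L]] using PL_pos[OF L]
      by (simp add: ennreal_of_nat_eq_real_of_nat flip: ennreal_mult)
  qed
  also have "\<dots> = 1"
    using sum_pmf_eq_1[OF PL_finite order_refl] by simp
  finally show "emeasure law (space law) = 1"
    by simp
qed

lemma AE_law:
  assumes [measurable]: "Measurable.pred sample_space P"
    and P: "\<And>L e X. L \<in> set_pmf PL \<Longrightarrow> e \<in> {1..L} \<Longrightarrow> P (L, e, pad D L X)"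
  shows "AE \<omega> in law. P \<omega>"
proof -
  have "(\<integral>\<^sup>+\<omega>. indicator {\<omega>. \<not> P \<omega>} \<omega> \<partial>law) = 0"
    using P by (simp add: nn_integral_law)
  moreover have "{\<omega> \<in> space law. P \<omega>} \<in> sets law"
    by measurable
  ultimately show ?thesis
    by (simp add: AE_iff_nn_integral)
qed

lemma nn_integral_law_finite:
  assumes [measurable]: "\<psi> \<in> borel_measurable sample_space"
    and finite: "\<And>L e. L \<in> set_pmf PL \<Longrightarrow> e \<in> {1..L} \<Longrightarrow>
      (\<integral>\<^sup>+X. ennreal (dens L e X) * \<psi> (L, e, pad D L X) \<partial>leb_mat D L) < \<infinity>"
  shows "(\<integral>\<^sup>+\<omega>. \<psi> \<omega> \<partial>law) < \<infinity>"
proof -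
  have "(\<integral>\<^sup>+X. (\<Sum>e=1..L. ennreal (dens L e X) * \<psi> (L, e, pad D L X)) \<partial>leb_mat D L) < \<infinity>"
    if L: "L \<in> set_pmf PL" for L
  proof -
    have "(\<lambda>X. ennreal (dens L e X) * \<psi> (L, e, pad D L X)) \<in> borel_measurable (leb_mat D L)"
      if "e \<in> {1..L}" for e
      using dens_measurable[OF PL_pos[OF L] that] by measurable
    then show ?thesis
      using finite[OF L] by (subst nn_integral_sum) auto
  qed
  then show ?thesis
    unfolding nn_integral_law[OF assms(1)] using PL_finite by (simp add: ennreal_mult_less_top)
qed

section \<open>Second moments\<close>

lemma nn_integral_g_gauss_dens_half:
  assumes L: "1 \<le> L" and e: "e \<in> {1..L}"
  shows "(\<integral>\<^sup>+Y. ennreal (g L e (proj D L Y kstar) * gauss_dens D L (\<lambda>p. Y p / 2)) \<partial>leb_mat D L) =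
    ennreal (2 ^ (L * D))"
proof -
  let ?I = "{1..L} \<times> {1..D}"
  define f where "f X = ennreal (g L e (proj D L X (\<lambda>d. 2 * kstar d)) * gauss_dens D L X)" for X
  have f_measurable: "f \<in> borel_measurable (PiM ?I (\<lambda>_. lborel))"
    unfolding f_def leb_mat_def[symmetric] using g_proj_measurable[OF L e] by measurable
  have "f (\<lambda>p\<in>?I. (1/2) * Y p) = ennreal (g L e (proj D L Y kstar) * gauss_dens D L (\<lambda>p. Y p / 2))" for Y
  proof -
    have "proj D L (\<lambda>p\<in>?I. (1/2) * Y p) (\<lambda>d. 2 * kstar d) = proj D L Y kstar"
      unfolding proj_def by (intro restrict_ext arg_cong2[where f = "(/)"] sum.cong) auto
    moreover have "gauss_dens D L (\<lambda>p\<in>?I. (1/2) * Y p) = gauss_dens D L (\<lambda>p. Y p / 2)"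
      unfolding gauss_dens_def by (intro prod.cong) auto
    ultimately show ?thesis
      unfolding f_def by simp
  qed
  then show ?thesis
    using nn_integral_PiM_lborel_scale[of "1/2" ?I f] f_measurable g_density[OF L e, of "\<lambda>d. 2 * kstar d"]
    by (simp add: f_def leb_mat_def)
qed

lemma nn_integral_dens_frob_sq_finite:
  assumes L: "1 \<le> L" and e: "e \<in> {1..L}"
  shows "(\<integral>\<^sup>+X. ennreal (dens L e X * frob_sq D L X) \<partial>leb_mat D L) < \<infinity>"
proof -
  have "(\<integral>\<^sup>+X. ennreal (dens L e X * frob_sq D L X) \<partial>leb_mat D L)
      \<le> (\<integral>\<^sup>+Y. ennreal (8/3) * ennreal (g L e (proj D L Y kstar) * gauss_dens D L (\<lambda>p. Y p / 2)) \<partial>leb_mat D L)"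
  proof (rule nn_integral_mono)
    fix Y
    have "dens L e Y * frob_sq D L Y \<le> g L e (proj D L Y kstar) * (8/3 * gauss_dens D L (\<lambda>p. Y p / 2))"
      unfolding dens_def mult.assoc
      by (intro mult_left_mono gauss_dens_mult_frob_sq_le less_imp_le g_pos L e)
    then have "ennreal (dens L e Y * frob_sq D L Y) \<le>
        ennreal (8/3 * (g L e (proj D L Y kstar) * gauss_dens D L (\<lambda>p. Y p / 2)))"
      by (intro ennreal_leI) (simp add: mult_ac)
    then show "ennreal (dens L e Y * frob_sq D L Y) \<le>
        ennreal (8/3) * ennreal (g L e (proj D L Y kstar) * gauss_dens D L (\<lambda>p. Y p / 2))"
      by (subst (asm) ennreal_mult') simp_all
  qed
  also have "\<dots> = ennreal (8/3) * ennreal (2 ^ (L * D))"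
  proof -
    have "(\<lambda>Y. gauss_dens D L (\<lambda>p. Y p / 2)) \<in> borel_measurable (leb_mat D L)"
      unfolding gauss_dens_def measurable_cong_sets[OF sets_leb_mat refl] by measurable
    then show ?thesis
      using g_proj_measurable[OF L e] by (simp add: nn_integral_cmult nn_integral_g_gauss_dens_half[OF L e])
  qed
  also have "\<dots> < \<infinity>"
    by (simp add: ennreal_mult_less_top)
  finally show ?thesis .
qed

lemma integrable_frob_sq: "integrable law (\<lambda>\<omega>. frob_sq D (fst \<omega>) (snd (snd \<omega>)))"
proof (rule integrableI_nonneg)
  show "(\<lambda>\<omega>. frob_sq D (fst \<omega>) (snd (snd \<omega>))) \<in> borel_measurable law"
    by measurable
  show "AE \<omega> in law. 0 \<le> frob_sq D (fst \<omega>) (snd (snd \<omega>))"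
    by (simp add: frob_sq_nonneg)
  show "(\<integral>\<^sup>+\<omega>. ennreal (frob_sq D (fst \<omega>) (snd (snd \<omega>))) \<partial>law) < \<infinity>"
  proof (rule nn_integral_law_finite)
    fix L e assume "L \<in> set_pmf PL" "e \<in> {1..L}"
    with nn_integral_dens_frob_sq_finite[OF PL_pos this(2)]
    show "(\<integral>\<^sup>+X. ennreal (dens L e X) *
        ennreal (frob_sq D (fst (L, e, pad D L X)) (snd (snd (L, e, pad D L X)))) \<partial>leb_mat D L) < \<infinity>"
      by (simp add: frob_sq_pad dens_nonneg PL_pos flip: ennreal_mult')
  qed measurable
qed

lemma integrable_square_of_frob_bound:
  assumes [measurable]: "u \<in> borel_measurable sample_space"
    and bound: "\<And>L e X. L \<in> set_pmf PL \<Longrightarrow> e \<in> {1..L} \<Longrightarrow> (u (L, e, pad D L X))\<^sup>2 \<le> C * frob_sq D L X"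
  shows "integrable law (\<lambda>\<omega>. (u \<omega>)\<^sup>2)"
proof (rule Bochner_Integration.integrable_bound)
  show "integrable law (\<lambda>\<omega>. C * frob_sq D (fst \<omega>) (snd (snd \<omega>)))"
    using integrable_frob_sq by simp
  show "AE \<omega> in law. norm ((u \<omega>)\<^sup>2) \<le> norm (C * frob_sq D (fst \<omega>) (snd (snd \<omega>)))"
  proof (rule AE_law)
    fix L e X assume "L \<in> set_pmf PL" "e \<in> {1..L}"
    then show "norm ((u (L, e, pad D L X))\<^sup>2) \<le>
        norm (C * frob_sq D (fst (L, e, pad D L X)) (snd (snd (L, e, pad D L X))))"
      using bound[of L e X] abs_ge_self[of "C * frob_sq D L X"] by (simp add: frob_sq_pad)
  qed measurable
qed measurable

lemma integrable_target_square: "integrable law (\<lambda>\<omega>. (target D v \<omega>)\<^sup>2)"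
proof (rule integrable_square_of_frob_bound)
  fix L e :: nat and X assume "e \<in> {1..L}"
  then show "(target D v (L, e, pad D L X))\<^sup>2 \<le> (\<Sum>d=1..D. (v d)\<^sup>2) / real D * frob_sq D L X"
    unfolding target_pad[OF \<open>e \<in> {1..L}\<close>] by (rule proj_square_le)
qed measurable

lemma integrable_softmax_pred_square:
  "integrable law (\<lambda>\<omega>. (softmax_pred D (fst \<omega>) k v (snd (snd \<omega>)))\<^sup>2)"
proof (rule integrable_square_of_frob_bound)
  fix L e :: nat and X
  show "(softmax_pred D (fst (L, e, pad D L X)) k v (snd (snd (L, e, pad D L X))))\<^sup>2
      \<le> (\<Sum>d=1..D. (v d)\<^sup>2) / real D * frob_sq D L X"
    unfolding fst_conv snd_conv softmax_pred_pad by (rule softmax_pred_square_le)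
qed measurable

section \<open>Orthogonality of the Bayes residual\<close>

lemma integral_residual_orthogonal:
  fixes v :: "nat \<Rightarrow> real" and h :: "nat \<times> (nat \<times> nat \<Rightarrow> real) \<Rightarrow> real"
  defines "\<phi> \<equiv> \<lambda>\<omega>. (target D v \<omega> - softmax_pred D (fst \<omega>) (\<lambda>d. c * kstar d) v (snd (snd \<omega>))) *
    h (fst \<omega>, snd (snd \<omega>))"
  assumes [measurable]: "h \<in> borel_measurable obs_space"
    and integrable: "integrable law \<phi>"
  shows "integral\<^sup>L law \<phi> = 0"
proof -
  have [measurable]: "\<phi> \<in> borel_measurable sample_space"
    unfolding \<phi>_def by measurable
  have "(\<Sum>e=1..L. ennreal (dens L e X) * ennreal (\<phi> (L, e, pad D L X))) =
      (\<Sum>e=1..L. ennreal (dens L e X) * ennreal (- \<phi> (L, e, pad D L X)))" if L: "L \<in> set_pmf PL" for L X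
  proof -
    have "(\<Sum>e=1..L. dens L e X * \<phi> (L, e, pad D L X)) =
        (\<Sum>e=1..L. dens L e X * (proj D L X v e - softmax_pred D L (\<lambda>d. c * kstar d) v X)) * h (L, pad D L X)"
      unfolding \<phi>_def sum_distrib_right by (intro sum.cong) (simp_all add: target_pad softmax_pred_pad)
    also have "\<dots> = 0"
      using sum_dens_mult_residual[OF PL_pos[OF L]] by simp
    finally show ?thesis
      using dens_nonneg[OF PL_pos[OF L]] by (intro sum_ennreal_weighted_eq_uminus)
  qed
  then have "(\<integral>\<^sup>+\<omega>. ennreal (\<phi> \<omega>) \<partial>law) = (\<integral>\<^sup>+\<omega>. ennreal (- \<phi> \<omega>) \<partial>law)"
    by (simp add: nn_integral_law)
  then show ?thesis
    using integrable by (simp add: real_lebesgue_integral_def)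
qed

lemma real_cond_exp_target_eq_softmax_pred:
  "AE \<omega> in law. real_cond_exp law (obs_algebra law) (target D v) \<omega> =
     softmax_pred D (fst \<omega>) (\<lambda>d. c * kstar d) v (snd (snd \<omega>))"
proof -
  interpret prob_space law
    by (rule prob_space_law)
  let ?T = "\<lambda>\<omega>. (fst \<omega>, snd (snd \<omega>))"
  let ?h = "\<lambda>p. softmax_pred D (fst p) (\<lambda>d. c * kstar d) v (snd p)"
  have y_integrable: "integrable law (target D v)"
    by (rule square_integrable_imp_integrable[OF _ integrable_target_square]) measurable
  have f_integrable: "integrable law (\<lambda>\<omega>. softmax_pred D (fst \<omega>) (\<lambda>d. c * kstar d) v (snd (snd \<omega>)))"
    by (rule square_integrable_imp_integrable[OF _ integrable_softmax_pred_square]) measurable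
  have "AE \<omega> in law. real_cond_exp law (vimage_algebra (space law) ?T obs_space) (target D v) \<omega> = ?h (?T \<omega>)"
  proof (rule real_cond_exp_vimage_algebra_charact)
    show "?T \<in> measurable law obs_space" "?h \<in> borel_measurable obs_space"
      by measurable
    show "integrable law (target D v)" "integrable law (\<lambda>\<omega>. ?h (?T \<omega>))"
      using y_integrable f_integrable by simp_all
    fix B :: "(nat \<times> (nat \<times> nat \<Rightarrow> real)) set"
    assume [measurable]: "B \<in> sets obs_space"
    have "integrable law (\<lambda>\<omega>. (target D v \<omega> - softmax_pred D (fst \<omega>) (\<lambda>d. c * kstar d) v (snd (snd \<omega>))) *
        indicator B (fst \<omega>, snd (snd \<omega>)))"
      by (rule Bochner_Integration.integrable_bound[OF Bochner_Integration.integrable_diff[OF y_integrable f_integrable]])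
         (auto simp: indicator_def)
    then show "(\<integral>\<omega>. (target D v \<omega> - ?h (?T \<omega>)) * indicator B (?T \<omega>) \<partial>law) = 0"
      using integral_residual_orthogonal[of "indicator B" v] by simp
  qed
  then show ?thesis
    by (simp add: obs_algebra_def)
qed

lemma optimal_attention_risk_le:
  "(\<integral>\<^sup>+\<omega>. ennreal ((target D v \<omega> - softmax_pred D (fst \<omega>) (\<lambda>d. c * kstar d) v (snd (snd \<omega>)))\<^sup>2) \<partial>law)
    \<le> (\<integral>\<^sup>+\<omega>. ennreal ((target D v \<omega> - softmax_pred D (fst \<omega>) k w (snd (snd \<omega>)))\<^sup>2) \<partial>law)"
proof -
  let ?y = "target D v"
  let ?opt = "\<lambda>\<omega>. softmax_pred D (fst \<omega>) (\<lambda>d. c * kstar d) v (snd (snd \<omega>))"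
  let ?f = "\<lambda>\<omega>. softmax_pred D (fst \<omega>) k w (snd (snd \<omega>))"
  have "(\<integral>\<^sup>+\<omega>. ennreal ((?y \<omega> - ?opt \<omega>)\<^sup>2) \<partial>law) \<le>
      (\<integral>\<^sup>+\<omega>. ennreal (((?y \<omega> - ?opt \<omega>) + (?opt \<omega> - ?f \<omega>))\<^sup>2) \<partial>law)"
  proof (rule nn_integral_square_le_of_orthogonal)
    show residual_sq: "integrable law (\<lambda>\<omega>. (?y \<omega> - ?opt \<omega>)\<^sup>2)"
      by (intro integrable_square_diff integrable_target_square integrable_softmax_pred_square) measurable
    show difference_sq: "integrable law (\<lambda>\<omega>. (?opt \<omega> - ?f \<omega>)\<^sup>2)"
      by (intro integrable_square_diff integrable_softmax_pred_square) measurable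
    have "integrable law (\<lambda>\<omega>. (?y \<omega> - ?opt \<omega>) * (?opt \<omega> - ?f \<omega>))"
      by (intro integrable_mult_of_square_integrable residual_sq difference_sq) measurable
    then show "(\<integral>\<omega>. (?y \<omega> - ?opt \<omega>) * (?opt \<omega> - ?f \<omega>) \<partial>law) = 0"
      by (rule integral_residual_orthogonal[where
            h = "\<lambda>p. softmax_pred D (fst p) (\<lambda>d. c * kstar d) v (snd p) - softmax_pred D (fst p) k w (snd p)",
            simplified])
         measurable
  qed measurable
  then show ?thesis
    by simp
qed

end

theorem proposition2:
  fixes D Lbar :: nat and PL :: "nat pmf"
    and g :: "nat \<Rightarrow> nat \<Rightarrow> (nat \<Rightarrow> real) \<Rightarrow> real"
    and c :: real and kstar vstar :: "nat \<Rightarrow> real"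
  assumes D: "D \<ge> 1" and Lbar: "Lbar \<ge> 1"
    and PL: "set_pmf PL \<subseteq> {1..Lbar}"
    and g_meas: "\<And>L e. L \<ge> 1 \<Longrightarrow> e \<in> {1..L} \<Longrightarrow>
        g L e \<in> borel_measurable (PiM {1..L} (\<lambda>_. (borel :: real measure)))"
    and g_nonneg: "\<And>L e ch. L \<ge> 1 \<Longrightarrow> e \<in> {1..L} \<Longrightarrow>
        ch \<in> PiE {1..L} (\<lambda>_. UNIV) \<Longrightarrow> g L e ch \<ge> 0"
    and g_density: "\<And>k L e. L \<ge> 1 \<Longrightarrow> e \<in> {1..L} \<Longrightarrow>
        (\<integral>\<^sup>+ X. ennreal (g L e (proj D L X k) * gauss_dens D L X) \<partial>leb_mat D L) = 1"
    and c: "c \<ge> 0"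
    and g_ratio: "\<And>L e e' ch. L \<ge> 1 \<Longrightarrow> e \<in> {1..L} \<Longrightarrow> e' \<in> {1..L} \<Longrightarrow>
        ch \<in> PiE {1..L} (\<lambda>_. UNIV) \<Longrightarrow>
        g L e ch / g L e' ch = exp (c * (ch e - ch e'))"
  shows "let M = joint_law PL g D kstar;
             y = target D vstar;
             risk = (\<lambda>k v. \<integral>\<^sup>+ \<omega>. ennreal ((y \<omega> - softmax_pred D (fst \<omega>) k v (snd (snd \<omega>)))\<^sup>2) \<partial>M);
             bayes = (\<integral>\<^sup>+ \<omega>. ennreal ((y \<omega> - real_cond_exp M (obs_algebra M) y \<omega>)\<^sup>2) \<partial>M)
         in (\<exists>k v. risk k v = bayes) \<and> (\<forall>k v. bayes \<le> risk k v)"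
proof -
  interpret attention_model D PL g c kstar
  proof
    show "finite (set_pmf PL)"
      using PL by (rule finite_subset) simp
  qed (use PL g_meas g_nonneg g_density g_ratio in auto)
  have "AE \<omega> in law. real_cond_exp law (obs_algebra law) (target D vstar) \<omega> =
      softmax_pred D (fst \<omega>) (\<lambda>d. c * kstar d) vstar (snd (snd \<omega>))"
    by (rule real_cond_exp_target_eq_softmax_pred)
  then have bayes_eq:
    "(\<integral>\<^sup>+\<omega>. ennreal ((target D vstar \<omega> - real_cond_exp law (obs_algebra law) (target D vstar) \<omega>)\<^sup>2) \<partial>law)
      = (\<integral>\<^sup>+\<omega>. ennreal ((target D vstar \<omega> - softmax_pred D (fst \<omega>) (\<lambda>d. c * kstar d) vstar (snd (snd \<omega>)))\<^sup>2) \<partial>law)"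
    by (intro nn_integral_cong_AE) auto
  show ?thesis
    unfolding Let_def bayes_eq using optimal_attention_risk_le by blast
qed

end
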